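(* Let $d\ge 1$. There is a unique map $\operatorname{vol}^\otimes_d$ from the set of multirectangles in $\mathbb{R}^d$ to $\mathbb{R}^{\otimes d}$ that is additive under disjoint unions and maps each rectangle $\prod_{i=1}^d[a_i,a_i+t_i)$ (with $t_i>0$) to $t_1\otimes\cdots\otimes t_d$.
   Context: A rectangle in $\mathbb{R}^d$ is a set $\prod_{i=1}^d[a_i,b_i)$ with $a_i<b_i$ real. A multirectangle is a finite union of rectangles (the empty set included). $\mathbb{R}^{\otimes d}$ denotes the $d$-th tensor power of $\mathbb{R}$ over $\mathbb{Q}$. *)

theory Defs
  imports Complex_Main "HOL-Library.Poly_Mapping"
begin

definition rect :: "nat \<Rightarrow> real list \<Rightarrow> real list \<Rightarrow> real list set" where
  "rect d a b = {x. length x = d \<and> (\<forall>i<d. a ! i \<le> x ! i \<and> x ! i < b ! i)}"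

definition is_rect :: "nat \<Rightarrow> real list set \<Rightarrow> bool" where
  "is_rect d R \<longleftrightarrow> (\<exists>a b. length a = d \<and> length b = d \<and> (\<forall>i<d. a ! i < b ! i) \<and> R = rect d a b)"

definition multirect :: "nat \<Rightarrow> real list set \<Rightarrow> bool" where
  "multirect d M \<longleftrightarrow> (\<exists>F. finite F \<and> (\<forall>R\<in>F. is_rect d R) \<and> M = \<Union>F)"

text \<open>Formal Q-linear combinations of words of reals, modulo the multilinearity relations
  (in each slot). The degree-d part is the d-th tensor power of R over Q.\<close>

definition pt :: "real list \<Rightarrow> (real list \<Rightarrow>\<^sub>0 rat)" where
  "pt xs = Poly_Mapping.single xs 1"

definition qscale :: "rat \<Rightarrow> (real list \<Rightarrow>\<^sub>0 rat) \<Rightarrow> (real list \<Rightarrow>\<^sub>0 rat)" where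
  "qscale q p = Poly_Mapping.map ((*) q) p"

lemma lookup_qscale [simp]: "poly_mapping.lookup (qscale q p) k = q * poly_mapping.lookup p k"
  unfolding qscale_def by transfer (simp add: when_def)

lemma qscale_minus_one: "qscale (-1) p = - p"
  by (rule poly_mapping_eqI) (simp add: lookup_minus)

inductive_set tensor_rel :: "(real list \<Rightarrow>\<^sub>0 rat) set" where
  zero: "0 \<in> tensor_rel"
| add_gen: "pt (xs @ [a + b] @ ys) - pt (xs @ [a] @ ys) - pt (xs @ [b] @ ys) \<in> tensor_rel"
| hom_gen: "pt (xs @ [of_rat q * a] @ ys) - qscale q (pt (xs @ [a] @ ys)) \<in> tensor_rel"
| plus: "p \<in> tensor_rel \<Longrightarrow> p' \<in> tensor_rel \<Longrightarrow> p + p' \<in> tensor_rel"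
| scale: "p \<in> tensor_rel \<Longrightarrow> qscale q p \<in> tensor_rel"

definition tensor_equiv :: "(real list \<Rightarrow>\<^sub>0 rat) \<Rightarrow> (real list \<Rightarrow>\<^sub>0 rat) \<Rightarrow> bool" where
  "tensor_equiv p q \<longleftrightarrow> p - q \<in> tensor_rel"

lemma tensor_rel_uminus: "p \<in> tensor_rel \<Longrightarrow> - p \<in> tensor_rel"
  by (metis qscale_minus_one tensor_rel.scale)

lemma equivp_tensor_equiv: "equivp tensor_equiv"
proof (rule equivpI)
  show "reflp tensor_equiv" by (simp add: reflp_def tensor_equiv_def tensor_rel.zero)
  show "symp tensor_equiv" unfolding symp_def tensor_equiv_def
    by (metis minus_diff_eq tensor_rel_uminus)
  show "transp tensor_equiv" unfolding transp_def tensor_equiv_def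
    by (metis diff_add_cancel add_diff_eq tensor_rel.plus)
qed

quotient_type tensor = "real list \<Rightarrow>\<^sub>0 rat" / tensor_equiv
  by (rule equivp_tensor_equiv)

instantiation tensor :: zero
begin
lift_definition zero_tensor :: tensor is "0 :: real list \<Rightarrow>\<^sub>0 rat" .
instance ..
end

instantiation tensor :: plus
begin
lift_definition plus_tensor :: "tensor \<Rightarrow> tensor \<Rightarrow> tensor" is "(+)"
  unfolding tensor_equiv_def
  by (metis (no_types, lifting) add_diff_add tensor_rel.plus)
instance ..
end

lift_definition ptensor :: "real list \<Rightarrow> tensor" is pt .

definition tensor_deg :: "nat \<Rightarrow> tensor set" where
  "tensor_deg d = {x. \<exists>p. x = abs_tensor p \<and> (\<forall>xs. poly_mapping.lookup p xs \<noteq> 0 \<longrightarrow> length xs = d)}"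

end

theory Submission
  imports Defs
begin

text \<open>For a multirectangle M, a point x and a set S of coordinates, the points x - \<delta> e_S
  (\<delta> \<rightarrow> 0+) either eventually lie in M or eventually do not. The alternating count
  w_M(x) = \<Sum>_S (-1)^(d - |S|) [x - \<delta> e_S eventually in M] is therefore additive on disjoint
  multirectangles. It vanishes unless every coordinate of x is a corner coordinate of M, so it is
  a finitely supported function on words of length d. For a box [a, a + t) it is the signed
  indicator of the 2^d corners, and multilinearity of \<otimes>, applied one slot at a time, collapses
  the corresponding signed sum of pure tensors to t_1 \<otimes> ... \<otimes> t_d. The class of w_M is thus a
  volume. Uniqueness: the corner coordinates of the rectangles forming M cut it into finitely
  many disjoint grid cells, each of them a rectangle.\<close>

instance tensor :: comm_monoid_add
proof
  fix a b c :: tensor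
  show "a + b + c = a + (b + c)"
    by (induct a rule: tensor.abs_induct, induct b rule: tensor.abs_induct, induct c rule: tensor.abs_induct)
       (simp add: plus_tensor.abs_eq add.assoc)
  show "a + b = b + a"
    by (induct a rule: tensor.abs_induct, induct b rule: tensor.abs_induct)
       (simp add: plus_tensor.abs_eq add.commute)
  show "0 + a = a"
    by (induct a rule: tensor.abs_induct) (simp add: plus_tensor.abs_eq zero_tensor.abs_eq)
qed

lemma tensor_add_self_eq_zero: "(x::tensor) + x = x \<Longrightarrow> x = 0"
proof (induction x rule: tensor.abs_induct)
  case (1 p)
  then have "p + p - p \<in> tensor_rel"
    by (simp add: plus_tensor.abs_eq tensor.abs_eq_iff tensor_equiv_def)
  then show ?case
    by (simp add: zero_tensor.abs_eq tensor.abs_eq_iff tensor_equiv_def)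
qed

lemma tensor_rel_sum: "(\<And>i. i \<in> I \<Longrightarrow> f i \<in> tensor_rel) \<Longrightarrow> sum f I \<in> tensor_rel"
  by (induction I rule: infinite_finite_induct) (simp_all add: tensor_rel.zero tensor_rel.plus)

lemma qscale_one [simp]: "qscale 1 p = p"
  by (rule poly_mapping_eqI) simp

lemma lookup_pt: "poly_mapping.lookup (pt k) x = of_bool (k = x)"
  by (simp add: pt_def Poly_Mapping.lookup_single when_def)

lemma tensor_rel_add_at:
  "n < length l \<Longrightarrow> pt (l[n := a + b]) - pt (l[n := a]) - pt (l[n := b]) \<in> tensor_rel"
  using tensor_rel.add_gen[of "take n l" a b "drop (Suc n) l"] by (simp add: upd_conv_take_nth_drop)

section \<open>Alternating sums over subsets\<close>

lemma sum_Pow_remove: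
  assumes "finite D" "i \<in> D"
  shows "(\<Sum>S\<in>Pow D. g S) = (\<Sum>S\<in>Pow (D - {i}). g S + g (insert i S))"
proof -
  have "Pow D = Pow (D - {i}) \<union> insert i ` Pow (D - {i})"
    using Pow_insert[of i "D - {i}"] assms(2) by (simp add: insert_absorb)
  moreover have "inj_on (insert i) (Pow (D - {i}))"
    by (auto simp: inj_on_def)
  moreover have "Pow (D - {i}) \<inter> insert i ` Pow (D - {i}) = {}"
    by auto
  ultimately show ?thesis
    using assms(1) by (simp add: sum.union_disjoint sum.reindex sum.distrib)
qed

lemma sum_Pow_alternating_eq_0:
  fixes f :: "'a set \<Rightarrow> 'b::comm_ring_1"
  assumes "finite D" "i \<in> D" "\<And>S. f (insert i S) = f S"
  shows "(\<Sum>S\<in>Pow D. (-1)^card (D - S) * f S) = 0"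
proof -
  have "(-1)^card (D - S) * f S + (-1)^card (D - insert i S) * f (insert i S) = 0"
    if "S \<in> Pow (D - {i})" for S
  proof -
    have "D - S = insert i (D - insert i S)"
      using that assms(2) by auto
    then have "card (D - S) = Suc (card (D - insert i S))"
      using assms(1) by (metis card_insert_disjoint finite_Diff Diff_iff insertI1)
    then show ?thesis
      by (simp add: assms(3))
  qed
  then show ?thesis
    unfolding sum_Pow_remove[OF assms(1,2)] by (simp add: sum.neutral)
qed

lemma prod_of_bool: "finite A \<Longrightarrow> (\<Prod>k\<in>A. of_bool (P k)) = (of_bool (\<forall>k\<in>A. P k) :: 'a::comm_semiring_1)"
  by (induction A rule: finite_induct) auto

lemma sum_Pow_alternating_of_bool:
  fixes R :: "'a \<Rightarrow> bool \<Rightarrow> bool"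
  assumes "finite D"
  shows "(\<Sum>S\<in>Pow D. (-1)^card (D - S) * of_bool (\<forall>k\<in>D. R k (k \<in> S)))
       = (\<Prod>k\<in>D. of_bool (R k True) - (of_bool (R k False) :: 'b::comm_ring_1))"
proof -
  have split: "of_bool (\<forall>k\<in>D. R k (k \<in> S))
      = (\<Prod>k\<in>S. of_bool (R k True)) * (\<Prod>k\<in>D - S. (of_bool (R k False) :: 'b))"
    if "S \<subseteq> D" for S
  proof -
    have "(\<forall>k\<in>D. R k (k \<in> S)) \<longleftrightarrow> (\<forall>k\<in>S. R k True) \<and> (\<forall>k\<in>D - S. R k False)"
      using that by (auto; metis (full_types) DiffI subsetD)
    then show ?thesis
      using that assms by (simp add: prod_of_bool finite_subset)
  qed
  have "(\<Prod>k\<in>D. of_bool (R k True) - (of_bool (R k False) :: 'b))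
      = (\<Sum>S\<in>Pow D. (\<Prod>k\<in>S. of_bool (R k True)) * (\<Prod>k\<in>D - S. - of_bool (R k False)))"
    unfolding diff_conv_add_uminus by (rule prod_add[OF assms])
  also have "\<dots> = (\<Sum>S\<in>Pow D. (-1)^card (D - S) * of_bool (\<forall>k\<in>D. R k (k \<in> S)))"
    by (intro sum.cong refl) (simp add: prod_uminus split mult.left_commute)
  finally show ?thesis ..
qed

section \<open>Telescoping corner sums\<close>

text \<open>In corner_word the first n letters are corner coordinates of the box [a,b) (b_k for
  k \<in> S, a_k otherwise) and the remaining ones are side lengths. So corner_sum interpolates
  between pt t (n = 0) and the signed sum over all corners of the box (n = d).\<close>

definition corner_word :: "nat \<Rightarrow> real list \<Rightarrow> real list \<Rightarrow> real list \<Rightarrow> nat \<Rightarrow> nat set \<Rightarrow> real list" where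
  "corner_word d a b t n S = map (\<lambda>k. if k < n then (if k \<in> S then b!k else a!k) else t!k) [0..<d]"

definition corner_sum :: "nat \<Rightarrow> real list \<Rightarrow> real list \<Rightarrow> real list \<Rightarrow> nat \<Rightarrow> real list \<Rightarrow>\<^sub>0 rat" where
  "corner_sum d a b t n = (\<Sum>S\<in>Pow {..<n}. qscale ((-1)^card ({..<n} - S)) (pt (corner_word d a b t n S)))"

lemma corner_sum_Suc_diff:
  assumes "n < d" "b!n = a!n + t!n"
  shows "corner_sum d a b t (Suc n) - corner_sum d a b t n
    = (\<Sum>S\<in>Pow {..<n}. qscale ((-1)^card ({..<n} - S))
        (pt ((corner_word d a b t n S)[n := a!n + t!n]) - pt ((corner_word d a b t n S)[n := a!n])
          - pt ((corner_word d a b t n S)[n := t!n])))"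
proof -
  let ?w = "\<lambda>S. corner_word d a b t n S"
  let ?c = "\<lambda>S. (-1::rat)^card ({..<n} - S)"
  have "corner_sum d a b t (Suc n) = (\<Sum>S\<in>Pow {..<n}.
      qscale (- ?c S) (pt ((?w S)[n := a!n])) + qscale (?c S) (pt ((?w S)[n := a!n + t!n])))"
  proof -
    have "{..<Suc n} - {n} = {..<n}"
      by auto
    moreover have "qscale ((-1)^card ({..<Suc n} - S)) (pt (corner_word d a b t (Suc n) S))
        = qscale (- ?c S) (pt ((?w S)[n := a!n]))"
      "qscale ((-1)^card ({..<Suc n} - insert n S)) (pt (corner_word d a b t (Suc n) (insert n S)))
        = qscale (?c S) (pt ((?w S)[n := a!n + t!n]))" if "S \<subseteq> {..<n}" for S
    proof -
      have "{..<Suc n} - S = insert n ({..<n} - S)" "{..<Suc n} - insert n S = {..<n} - S"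
        using that by auto
      moreover have "corner_word d a b t (Suc n) S = (?w S)[n := a!n]"
        "corner_word d a b t (Suc n) (insert n S) = (?w S)[n := a!n + t!n]"
        using that assms by (auto intro!: nth_equalityI simp: corner_word_def less_Suc_eq)
      ultimately show "qscale ((-1)^card ({..<Suc n} - S)) (pt (corner_word d a b t (Suc n) S))
          = qscale (- ?c S) (pt ((?w S)[n := a!n]))"
        "qscale ((-1)^card ({..<Suc n} - insert n S)) (pt (corner_word d a b t (Suc n) (insert n S)))
          = qscale (?c S) (pt ((?w S)[n := a!n + t!n]))"
        by simp_all
    qed
    ultimately show ?thesis
      unfolding corner_sum_def sum_Pow_remove[of "{..<Suc n}" n, simplified] by (intro sum.cong) auto
  qed
  moreover have "?w S = (?w S)[n := t!n]" for S
    using assms(1) by (intro nth_equalityI) (auto simp: corner_word_def nth_list_update)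
  then have "corner_sum d a b t n = (\<Sum>S\<in>Pow {..<n}. qscale (?c S) (pt ((?w S)[n := t!n])))"
    unfolding corner_sum_def by simp
  ultimately show ?thesis
    by (simp add: sum_subtractf[symmetric], intro sum.cong refl poly_mapping_eqI)
       (simp add: lookup_add lookup_minus algebra_simps)
qed

lemma corner_sum_Suc_equiv:
  assumes "n < d" "b!n = a!n + t!n"
  shows "tensor_equiv (corner_sum d a b t (Suc n)) (corner_sum d a b t n)"
  unfolding tensor_equiv_def corner_sum_Suc_diff[OF assms]
  by (intro tensor_rel_sum tensor_rel.scale tensor_rel_add_at) (simp add: corner_word_def assms(1))

lemma corner_sum_equiv_pt:
  assumes "n \<le> d" "\<And>k. k < d \<Longrightarrow> b!k = a!k + t!k" "length t = d"
  shows "tensor_equiv (corner_sum d a b t n) (pt t)"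
  using assms(1)
proof (induction n)
  case 0
  have "corner_word d a b t 0 {} = t"
    using assms(3) by (intro nth_equalityI) (auto simp: corner_word_def)
  then show ?case
    by (simp add: corner_sum_def tensor_equiv_def tensor_rel.zero)
next
  case (Suc n)
  then show ?case
    using corner_sum_Suc_equiv[of n d b a t] assms(2) equivp_transp[OF equivp_tensor_equiv] by simp
qed

section \<open>Approach from below and the corner weight\<close>

definition shift_down :: "real list \<Rightarrow> nat set \<Rightarrow> real \<Rightarrow> real list" where
  "shift_down x S \<delta> = map (\<lambda>i. x!i - (if i \<in> S then \<delta> else 0)) [0..<length x]"

definition approached :: "real list set \<Rightarrow> real list \<Rightarrow> nat set \<Rightarrow> bool" where
  "approached M x S \<longleftrightarrow> (\<forall>\<^sub>F \<delta> in at_right 0. shift_down x S \<delta> \<in> M)"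

text \<open>The point y - \<delta> lies in [a,b) for all small \<delta> > 0 iff y lies in (a,b].\<close>

definition Ico_limit_mem :: "real \<Rightarrow> real \<Rightarrow> real \<Rightarrow> bool \<Rightarrow> bool" where
  "Ico_limit_mem a b y s \<longleftrightarrow> (if s then a < y \<and> y \<le> b else a \<le> y \<and> y < b)"

lemma Ico_limit_mem_off_endpoints:
  "y \<noteq> a \<Longrightarrow> y \<noteq> b \<Longrightarrow> Ico_limit_mem a b y s \<longleftrightarrow> Ico_limit_mem a b y s'"
  by (auto simp: Ico_limit_mem_def less_le)

lemma eventually_shift_mem_Ico:
  "\<forall>\<^sub>F \<delta> in at_right (0::real).
     (a \<le> y - (if s then \<delta> else 0) \<and> y - (if s then \<delta> else 0) < b) \<longleftrightarrow> Ico_limit_mem a b y s"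
  unfolding eventually_at_right_field
proof (intro exI conjI allI impI)
  let ?\<epsilon> = "min (if a < y then y - a else 1) (if b < y then y - b else 1)"
  show "(0::real) < ?\<epsilon>"
    by simp
  fix \<delta> :: real
  assume "0 < \<delta>" "\<delta> < ?\<epsilon>"
  then show "(a \<le> y - (if s then \<delta> else 0) \<and> y - (if s then \<delta> else 0) < b) \<longleftrightarrow> Ico_limit_mem a b y s"
    unfolding Ico_limit_mem_def by (cases s; cases "a < y"; cases "b < y") auto
qed

lemma eventually_shift_mem_rect:
  assumes "length x = d"
  shows "\<forall>\<^sub>F \<delta> in at_right (0::real).
    shift_down x S \<delta> \<in> rect d a b \<longleftrightarrow> (\<forall>k<d. Ico_limit_mem (a!k) (b!k) (x!k) (k \<in> S))"
proof -
  have "\<forall>\<^sub>F \<delta> in at_right (0::real). \<forall>k\<in>{..<d}.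
      (a!k \<le> x!k - (if k \<in> S then \<delta> else 0) \<and> x!k - (if k \<in> S then \<delta> else 0) < b!k)
      \<longleftrightarrow> Ico_limit_mem (a!k) (b!k) (x!k) (k \<in> S)"
    by (intro eventually_ball_finite ballI eventually_shift_mem_Ico) simp
  then show ?thesis
    by eventually_elim (auto simp: shift_down_def rect_def assms)
qed

definition rects_repr :: "nat \<Rightarrow> (real list \<times> real list) set \<Rightarrow> real list set \<Rightarrow> bool" where
  "rects_repr d P M \<longleftrightarrow> finite P
     \<and> (\<forall>(a, b)\<in>P. length a = d \<and> length b = d \<and> (\<forall>i<d. a!i < b!i))
     \<and> M = (\<Union>(a, b)\<in>P. rect d a b)"

lemma multirect_imp_rects_repr:
  assumes "multirect d M"
  obtains P where "rects_repr d P M"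
proof -
  obtain F where F: "finite F" "\<forall>R\<in>F. is_rect d R" "M = \<Union>F"
    using assms unfolding multirect_def by blast
  have "\<forall>R\<in>F. \<exists>p. length (fst p) = d \<and> length (snd p) = d
      \<and> (\<forall>i<d. fst p!i < snd p!i) \<and> R = rect d (fst p) (snd p)"
    using F(2) unfolding is_rect_def by fastforce
  then obtain corners where
    "\<forall>R\<in>F. length (fst (corners R)) = d \<and> length (snd (corners R)) = d
       \<and> (\<forall>i<d. fst (corners R)!i < snd (corners R)!i) \<and> R = rect d (fst (corners R)) (snd (corners R))"
    by metis
  then have "rects_repr d (corners ` F) M"
    using F by (auto simp: rects_repr_def split_beta)
  then show ?thesis ..
qed

lemma rects_repr_Un: "rects_repr d P A \<Longrightarrow> rects_repr d Q B \<Longrightarrow> rects_repr d (P \<union> Q) (A \<union> B)"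
  by (auto simp: rects_repr_def)

lemma rects_repr_rect: "length a = d \<Longrightarrow> length b = d \<Longrightarrow> \<forall>i<d. a!i < b!i \<Longrightarrow> rects_repr d {(a, b)} (rect d a b)"
  by (simp add: rects_repr_def)

lemma rects_repr_finite: "rects_repr d P M \<Longrightarrow> finite P"
  by (simp add: rects_repr_def)

lemma rects_repr_memE:
  assumes "rects_repr d P M" "x \<in> M"
  obtains a b where "(a, b) \<in> P" "x \<in> rect d a b"
  using assms unfolding rects_repr_def by blast

lemma rects_repr_component:
  "rects_repr d P M \<Longrightarrow> (a, b) \<in> P \<Longrightarrow> length a = d \<and> length b = d \<and> rect d a b \<subseteq> M"
  unfolding rects_repr_def by fast

lemma rects_repr_length: "rects_repr d P M \<Longrightarrow> x \<in> M \<Longrightarrow> length x = d"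
  by (auto simp: rects_repr_def rect_def)

lemma eventually_shift_mem_iff:
  assumes "rects_repr d P M" "length x = d"
  shows "\<forall>\<^sub>F \<delta> in at_right (0::real).
    shift_down x S \<delta> \<in> M \<longleftrightarrow> (\<exists>(a, b)\<in>P. \<forall>k<d. Ico_limit_mem (a!k) (b!k) (x!k) (k \<in> S))"
proof -
  have "\<forall>\<^sub>F \<delta> in at_right (0::real). \<forall>(a, b)\<in>P.
      shift_down x S \<delta> \<in> rect d a b \<longleftrightarrow> (\<forall>k<d. Ico_limit_mem (a!k) (b!k) (x!k) (k \<in> S))"
    using assms(1) unfolding rects_repr_def
    by (intro eventually_ball_finite ballI) (auto intro: eventually_shift_mem_rect[OF assms(2)])
  moreover have "M = (\<Union>(a, b)\<in>P. rect d a b)"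
    using assms(1) by (simp add: rects_repr_def)
  ultimately show ?thesis
    by (elim eventually_mono) blast
qed

lemma approached_iff:
  assumes "rects_repr d P M" "length x = d"
  shows "approached M x S \<longleftrightarrow> (\<exists>(a, b)\<in>P. \<forall>k<d. Ico_limit_mem (a!k) (b!k) (x!k) (k \<in> S))"
  using eventually_subst[OF eventually_shift_mem_iff[OF assms]] by (simp add: approached_def)

lemma not_approached_length:
  assumes "rects_repr d P M" "length x \<noteq> d"
  shows "\<not> approached M x S"
proof
  assume "approached M x S"
  then have "\<forall>\<^sub>F \<delta> in at_right (0::real). length (shift_down x S \<delta>) = d"
    unfolding approached_def by (elim eventually_mono) (rule rects_repr_length[OF assms(1)])
  then show False
    using assms(2) by (simp add: shift_down_def)
qed

lemma eventually_shift_mem_iff_approached: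
  assumes "rects_repr d P M"
  shows "\<forall>\<^sub>F \<delta> in at_right (0::real). shift_down x S \<delta> \<in> M \<longleftrightarrow> approached M x S"
proof (cases "length x = d")
  case True
  then show ?thesis
    using eventually_shift_mem_iff[OF assms True] approached_iff[OF assms True] by simp
next
  case False
  then have "shift_down x S \<delta> \<notin> M" for \<delta>
    using rects_repr_length[OF assms] by (force simp: shift_down_def)
  then show ?thesis
    by (simp add: not_approached_length[OF assms False])
qed

lemma approached_Un:
  assumes "rects_repr d P A" "rects_repr d Q B" "A \<inter> B = {}"
  shows "approached (A \<union> B) x S \<longleftrightarrow> approached A x S \<or> approached B x S"
    and "\<not> (approached A x S \<and> approached B x S)"
proof -
  have "\<forall>\<^sub>F \<delta> in at_right (0::real). (shift_down x S \<delta> \<in> A \<longleftrightarrow> approached A x S)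
      \<and> (shift_down x S \<delta> \<in> B \<longleftrightarrow> approached B x S)
      \<and> (shift_down x S \<delta> \<in> A \<union> B \<longleftrightarrow> approached (A \<union> B) x S)"
    by (intro eventually_conj eventually_shift_mem_iff_approached[OF assms(1)]
        eventually_shift_mem_iff_approached[OF assms(2)]
        eventually_shift_mem_iff_approached[OF rects_repr_Un[OF assms(1,2)]])
  then obtain \<delta> where "shift_down x S \<delta> \<in> A \<longleftrightarrow> approached A x S"
      "shift_down x S \<delta> \<in> B \<longleftrightarrow> approached B x S"
      "shift_down x S \<delta> \<in> A \<union> B \<longleftrightarrow> approached (A \<union> B) x S"
    using eventually_happens'[OF trivial_limit_at_right_real] by blast
  then show "approached (A \<union> B) x S \<longleftrightarrow> approached A x S \<or> approached B x S"
    and "\<not> (approached A x S \<and> approached B x S)"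
    using assms(3) by auto
qed

definition corner_weight :: "nat \<Rightarrow> real list set \<Rightarrow> real list \<Rightarrow> rat" where
  "corner_weight d M x = (\<Sum>S\<in>Pow {..<d}. (-1)^card ({..<d} - S) * of_bool (approached M x S))"

lemma corner_weight_Un:
  assumes "rects_repr d P A" "rects_repr d Q B" "A \<inter> B = {}"
  shows "corner_weight d (A \<union> B) x = corner_weight d A x + corner_weight d B x"
proof -
  have "of_bool (approached (A \<union> B) x S) = of_bool (approached A x S) + (of_bool (approached B x S) :: rat)" for S
    using approached_Un[OF assms, of x S] by auto
  then show ?thesis
    by (simp add: corner_weight_def sum.distrib distrib_left)
qed

definition endpoints :: "(real list \<times> real list) set \<Rightarrow> real set" where
  "endpoints P = (\<Union>(a, b)\<in>P. set a \<union> set b)"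

lemma finite_endpoints: "finite P \<Longrightarrow> finite (endpoints P)"
  by (simp add: endpoints_def split_beta)

lemma endpoints_nth:
  "rects_repr d P M \<Longrightarrow> (a, b) \<in> P \<Longrightarrow> k < d \<Longrightarrow> a!k \<in> endpoints P \<and> b!k \<in> endpoints P"
  unfolding endpoints_def rects_repr_def by (force intro: nth_mem)

lemma corner_weight_support:
  assumes "rects_repr d P M" "corner_weight d M x \<noteq> 0"
  shows "length x = d" "set x \<subseteq> endpoints P"
proof -
  show len: "length x = d"
    using assms not_approached_length[OF assms(1)] by (force simp: corner_weight_def)
  have "x!i \<in> endpoints P" if i: "i < d" for i
  proof (rule ccontr)
    assume off_grid: "x!i \<notin> endpoints P"
    have "approached M x (insert i S) \<longleftrightarrow> approached M x S" for S
    proof -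
      have "Ico_limit_mem (a!k) (b!k) (x!k) (k \<in> insert i S) \<longleftrightarrow> Ico_limit_mem (a!k) (b!k) (x!k) (k \<in> S)"
        if "(a, b) \<in> P" "k < d" for a b k
        using endpoints_nth[OF assms(1) that(1) i] off_grid
        by (cases "k = i") (metis Ico_limit_mem_off_endpoints, simp)
      then show ?thesis
        unfolding approached_iff[OF assms(1) len] by blast
    qed
    then have "corner_weight d M x = 0"
      unfolding corner_weight_def using i by (intro sum_Pow_alternating_eq_0) auto
    then show False
      using assms(2) by simp
  qed
  then show "set x \<subseteq> endpoints P"
    using len by (auto simp: in_set_conv_nth)
qed

lemma finite_corner_weight_support:
  assumes "rects_repr d P M"
  shows "finite {x. corner_weight d M x \<noteq> 0}"
proof -
  have "{x. corner_weight d M x \<noteq> 0} \<subseteq> {xs. set xs \<subseteq> endpoints P \<and> length xs = d}"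
    using corner_weight_support[OF assms] by blast
  then show ?thesis
    by (rule finite_subset) (intro finite_lists_length_eq finite_endpoints rects_repr_finite[OF assms])
qed

lemma corner_weight_rect:
  assumes "length a = d" "length b = d" "\<forall>k<d. a!k < b!k"
  shows "corner_weight d (rect d a b) x = poly_mapping.lookup (corner_sum d a b t d) x"
proof (cases "length x = d")
  case False
  then have "corner_weight d (rect d a b) x = 0"
    using corner_weight_support(1)[OF rects_repr_rect[OF assms]] by blast
  moreover have "corner_word d a b t d S \<noteq> x" for S
    using False by (auto simp: corner_word_def)
  ultimately show ?thesis
    by (simp add: corner_sum_def lookup_sum lookup_pt)
next
  case True
  have "corner_weight d (rect d a b) x = (\<Sum>S\<in>Pow {..<d}. (-1)^card ({..<d} - S)
      * of_bool (\<forall>k\<in>{..<d}. Ico_limit_mem (a!k) (b!k) (x!k) (k \<in> S)))"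
    unfolding corner_weight_def approached_iff[OF rects_repr_rect[OF assms] True] by (simp add: Ball_def)
  also have "\<dots> = (\<Prod>k\<in>{..<d}. of_bool (Ico_limit_mem (a!k) (b!k) (x!k) True)
      - of_bool (Ico_limit_mem (a!k) (b!k) (x!k) False))"
    by (rule sum_Pow_alternating_of_bool) simp
  also have "\<dots> = (\<Prod>k\<in>{..<d}. of_bool (x!k = b!k) - of_bool (x!k = a!k))"
    using assms(3) by (intro prod.cong refl) (auto simp: Ico_limit_mem_def)
  also have "\<dots> = (\<Sum>S\<in>Pow {..<d}. (-1)^card ({..<d} - S)
      * of_bool (\<forall>k\<in>{..<d}. x!k = (if k \<in> S then b!k else a!k)))"
    by (rule sum_Pow_alternating_of_bool[of "{..<d}" "\<lambda>k s. x!k = (if s then b!k else a!k)",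
        unfolded if_True if_False, symmetric]) simp
  also have "\<dots> = poly_mapping.lookup (corner_sum d a b t d) x"
    unfolding corner_sum_def lookup_sum lookup_qscale lookup_pt
  proof (intro sum.cong refl)
    fix S
    have "corner_word d a b t d S = x \<longleftrightarrow> (\<forall>k\<in>{..<d}. x!k = (if k \<in> S then b!k else a!k))"
      using True by (auto simp: corner_word_def list_eq_iff_nth_eq)
    then show "(-1)^card ({..<d} - S) * of_bool (\<forall>k\<in>{..<d}. x!k = (if k \<in> S then b!k else a!k))
        = (-1)^card ({..<d} - S) * of_bool (corner_word d a b t d S = x)"
      by simp
  qed
  finally show ?thesis .
qed

definition tensor_volume :: "nat \<Rightarrow> real list set \<Rightarrow> tensor" where
  "tensor_volume d M = abs_tensor (Abs_poly_mapping (corner_weight d M))"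

lemma tensor_volume_rect:
  assumes "length a = d" "length t = d" "\<forall>i<d. 0 < t!i"
  shows "tensor_volume d (rect d a (map2 (+) a t)) = ptensor t"
proof -
  define b where "b = map2 (+) a t"
  have b: "length b = d" "\<And>k. k < d \<Longrightarrow> b!k = a!k + t!k"
    using assms(1,2) by (simp_all add: b_def)
  then have a_less_b: "\<forall>k<d. a!k < b!k"
    using assms(3) by simp
  have "Abs_poly_mapping (corner_weight d (rect d a b)) = corner_sum d a b t d"
    by (rule poly_mapping_eqI)
       (simp add: finite_corner_weight_support[OF rects_repr_rect[OF assms(1) b(1) a_less_b]]
          corner_weight_rect[OF assms(1) b(1) a_less_b])
  moreover have "tensor_equiv (corner_sum d a b t d) (pt t)"
    by (rule corner_sum_equiv_pt[OF le_refl b(2) assms(2)])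
  ultimately show ?thesis
    unfolding tensor_volume_def b_def[symmetric] ptensor.abs_eq by (simp add: tensor.abs_eq_iff)
qed

lemma tensor_volume_Un:
  assumes "multirect d A" "multirect d B" "A \<inter> B = {}"
  shows "tensor_volume d (A \<union> B) = tensor_volume d A + tensor_volume d B"
proof -
  obtain P Q where P: "rects_repr d P A" and Q: "rects_repr d Q B"
    using multirect_imp_rects_repr assms(1,2) by metis
  have PQ: "rects_repr d (P \<union> Q) (A \<union> B)"
    by (rule rects_repr_Un[OF P Q])
  have "Abs_poly_mapping (corner_weight d (A \<union> B))
      = Abs_poly_mapping (corner_weight d A) + Abs_poly_mapping (corner_weight d B)"
    by (rule poly_mapping_eqI)
       (simp only: lookup_add corner_weight_Un[OF P Q assms(3)]
          lookup_Abs_poly_mapping[OF finite_corner_weight_support[OF P]]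
          lookup_Abs_poly_mapping[OF finite_corner_weight_support[OF Q]]
          lookup_Abs_poly_mapping[OF finite_corner_weight_support[OF PQ]])
  then show ?thesis
    unfolding tensor_volume_def by (simp add: plus_tensor.abs_eq)
qed

lemma tensor_volume_in_tensor_deg:
  assumes "multirect d M"
  shows "tensor_volume d M \<in> tensor_deg d"
proof -
  obtain P where P: "rects_repr d P M"
    using multirect_imp_rects_repr assms by metis
  then show ?thesis
    unfolding tensor_deg_def tensor_volume_def
    using corner_weight_support(1)[OF P] finite_corner_weight_support[OF P] by auto
qed

section \<open>Decomposition into grid cells and uniqueness\<close>

definition grid_lo :: "real set \<Rightarrow> real \<Rightarrow> real" where
  "grid_lo G y = Max {g\<in>G. g \<le> y}"

definition grid_hi :: "real set \<Rightarrow> real \<Rightarrow> real" where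
  "grid_hi G y = Min {g\<in>G. y < g}"

lemma grid_lo_hi:
  assumes "finite G" "g \<in> G" "g \<le> y" "h \<in> G" "y < h"
  shows "grid_lo G y \<in> G" "g \<le> grid_lo G y" "grid_lo G y \<le> y"
    and "grid_hi G y \<in> G" "y < grid_hi G y" "grid_hi G y \<le> h"
proof -
  have lower: "finite {g\<in>G. g \<le> y}" "g \<in> {g\<in>G. g \<le> y}"
    using assms by auto
  have upper: "finite {g\<in>G. y < g}" "h \<in> {g\<in>G. y < g}"
    using assms by auto
  show "grid_lo G y \<in> G" "grid_lo G y \<le> y"
    using Max_in[OF lower(1)] lower(2) unfolding grid_lo_def by auto
  show "g \<le> grid_lo G y"
    unfolding grid_lo_def using lower by (rule Max_ge)
  show "grid_hi G y \<in> G" "y < grid_hi G y"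
    using Min_in[OF upper(1)] upper(2) unfolding grid_hi_def by auto
  show "grid_hi G y \<le> h"
    unfolding grid_hi_def using upper by (rule Min_le)
qed

lemma grid_lo_hi_eq:
  assumes "finite G" "g \<in> G" "g \<le> x" "h \<in> G" "x < h" "grid_lo G x \<le> y" "y < grid_hi G x"
  shows "grid_lo G y = grid_lo G x" "grid_hi G y = grid_hi G x"
proof -
  have "g' \<le> y \<longleftrightarrow> g' \<le> x" if "g' \<in> G" for g'
  proof
    assume "g' \<le> y"
    show "g' \<le> x"
    proof (rule ccontr)
      assume "\<not> g' \<le> x"
      then have "grid_hi G x \<le> g'"
        using grid_lo_hi(6)[OF assms(1-3) that] by simp
      then show False
        using \<open>g' \<le> y\<close> assms(7) by simp
    qed
  next
    assume "g' \<le> x"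
    then show "g' \<le> y"
      using grid_lo_hi(2)[OF assms(1) that _ assms(4,5)] assms(6) by simp
  qed
  then have "{g'\<in>G. g' \<le> y} = {g'\<in>G. g' \<le> x}" "{g'\<in>G. y < g'} = {g'\<in>G. x < g'}"
    by (auto simp: not_le[symmetric])
  then show "grid_lo G y = grid_lo G x" "grid_hi G y = grid_hi G x"
    by (simp_all add: grid_lo_def grid_hi_def)
qed

definition grid_cell :: "nat \<Rightarrow> real set \<Rightarrow> real list \<Rightarrow> real list set" where
  "grid_cell d G x = rect d (map (grid_lo G) x) (map (grid_hi G) x)"

lemma grid_cell_rect:
  assumes "finite G" "x \<in> rect d a b" "length a = d" "length b = d" "set a \<subseteq> G" "set b \<subseteq> G"
  shows "x \<in> grid_cell d G x" "grid_cell d G x \<subseteq> rect d a b" "is_rect d (grid_cell d G x)"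
    and "set (map (grid_lo G) x) \<subseteq> G" "set (map (grid_hi G) x) \<subseteq> G"
    and "y \<in> grid_cell d G x \<Longrightarrow> grid_cell d G y = grid_cell d G x"
proof -
  have x: "length x = d" "\<And>k. k < d \<Longrightarrow> a!k \<le> x!k \<and> x!k < b!k"
    using assms(2) by (auto simp: rect_def)
  have bracket: "a!k \<in> G" "a!k \<le> x!k" "b!k \<in> G" "x!k < b!k" if "k < d" for k
    using that x(2) assms(3-6) by (auto intro: nth_mem)
  have lo_hi: "grid_lo G (x!k) \<in> G \<and> a!k \<le> grid_lo G (x!k) \<and> grid_lo G (x!k) \<le> x!k
      \<and> grid_hi G (x!k) \<in> G \<and> x!k < grid_hi G (x!k) \<and> grid_hi G (x!k) \<le> b!k" if "k < d" for k
    using grid_lo_hi[OF assms(1) bracket[OF that]] by blast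
  show "x \<in> grid_cell d G x"
    using x(1) lo_hi by (simp add: grid_cell_def rect_def)
  show "grid_cell d G x \<subseteq> rect d a b"
    using x(1) lo_hi unfolding grid_cell_def rect_def by (force dest: order_trans less_le_trans)
  show "is_rect d (grid_cell d G x)"
    unfolding is_rect_def grid_cell_def using x(1) lo_hi
    by (intro exI[of _ "map (grid_lo G) x"] exI[of _ "map (grid_hi G) x"]) force
  show "set (map (grid_lo G) x) \<subseteq> G" "set (map (grid_hi G) x) \<subseteq> G"
    using x(1) lo_hi by (auto simp: in_set_conv_nth)
  assume "y \<in> grid_cell d G x"
  then have y: "length y = d" "\<And>k. k < d \<Longrightarrow> grid_lo G (x!k) \<le> y!k \<and> y!k < grid_hi G (x!k)"
    using x(1) by (auto simp: grid_cell_def rect_def)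
  have "grid_lo G (y!k) = grid_lo G (x!k) \<and> grid_hi G (y!k) = grid_hi G (x!k)" if "k < d" for k
    using grid_lo_hi_eq[OF assms(1) bracket[OF that]] y(2)[OF that] by blast
  then have "map (grid_lo G) y = map (grid_lo G) x" "map (grid_hi G) y = map (grid_hi G) x"
    using x(1) y(1) by (simp_all add: list_eq_iff_nth_eq)
  then show "grid_cell d G y = grid_cell d G x"
    by (simp add: grid_cell_def)
qed

lemma grid_cell_multirect:
  assumes "rects_repr d P M" "x \<in> M"
  shows "x \<in> grid_cell d (endpoints P) x" "grid_cell d (endpoints P) x \<subseteq> M"
    and "is_rect d (grid_cell d (endpoints P) x)"
    and "set (map (grid_lo (endpoints P)) x) \<subseteq> endpoints P"
      "set (map (grid_hi (endpoints P)) x) \<subseteq> endpoints P"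
    and "y \<in> grid_cell d (endpoints P) x \<Longrightarrow> grid_cell d (endpoints P) y = grid_cell d (endpoints P) x"
proof -
  obtain a b where ab: "(a, b) \<in> P" "x \<in> rect d a b"
    using rects_repr_memE[OF assms] by blast
  have "length a = d" "length b = d" "rect d a b \<subseteq> M"
    using rects_repr_component[OF assms(1) ab(1)] by simp_all
  moreover have "set a \<subseteq> endpoints P" "set b \<subseteq> endpoints P"
    using ab(1) by (auto simp: endpoints_def)
  ultimately show "x \<in> grid_cell d (endpoints P) x" "grid_cell d (endpoints P) x \<subseteq> M"
    "is_rect d (grid_cell d (endpoints P) x)"
    "set (map (grid_lo (endpoints P)) x) \<subseteq> endpoints P"
    "set (map (grid_hi (endpoints P)) x) \<subseteq> endpoints P"
    "y \<in> grid_cell d (endpoints P) x \<Longrightarrow> grid_cell d (endpoints P) y = grid_cell d (endpoints P) x"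
    using grid_cell_rect[OF finite_endpoints[OF rects_repr_finite[OF assms(1)]] ab(2)] by blast+
qed

lemma finite_grid_cells:
  assumes "rects_repr d P M"
  shows "finite (grid_cell d (endpoints P) ` M)"
proof -
  let ?G = "endpoints P"
  let ?L = "{xs. set xs \<subseteq> ?G \<and> length xs = d}"
  have "grid_cell d ?G ` M \<subseteq> (\<lambda>(l, h). rect d l h) ` (?L \<times> ?L)"
  proof (rule image_subsetI)
    fix x assume x: "x \<in> M"
    have "grid_cell d ?G x = (\<lambda>(l, h). rect d l h) (map (grid_lo ?G) x, map (grid_hi ?G) x)"
      by (simp add: grid_cell_def)
    moreover have "(map (grid_lo ?G) x, map (grid_hi ?G) x) \<in> ?L \<times> ?L"
      using grid_cell_multirect(4,5)[OF assms x] rects_repr_length[OF assms x] by simp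
    ultimately show "grid_cell d ?G x \<in> (\<lambda>(l, h). rect d l h) ` (?L \<times> ?L)"
      by (rule image_eqI)
  qed
  then show ?thesis
    by (rule finite_subset)
       (intro finite_imageI finite_cartesian_product finite_lists_length_eq
          finite_endpoints rects_repr_finite[OF assms])
qed

lemma multirect_disjoint_rects:
  assumes "multirect d M"
  obtains K where "finite K" "\<forall>C\<in>K. is_rect d C" "pairwise disjnt K" "\<Union>K = M"
proof -
  obtain P where P: "rects_repr d P M"
    using multirect_imp_rects_repr assms by metis
  let ?cell = "grid_cell d (endpoints P)"
  note cell = grid_cell_multirect[OF P]
  have "pairwise disjnt (?cell ` M)"
  proof (rule pairwiseI)
    fix C C' assume "C \<in> ?cell ` M" "C' \<in> ?cell ` M" "C \<noteq> C'"
    then obtain x x' where x: "x \<in> M" "C = ?cell x" and x': "x' \<in> M" "C' = ?cell x'"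
      by blast
    have "z \<notin> C'" if "z \<in> C" for z
      using cell(6)[OF x(1)] cell(6)[OF x'(1)] that x(2) x'(2) \<open>C \<noteq> C'\<close> by metis
    then show "disjnt C C'"
      by (auto simp: disjnt_def)
  qed
  moreover have "\<Union>(?cell ` M) = M"
    using cell(1,2) by blast
  moreover have "\<forall>C\<in>?cell ` M. is_rect d C"
    using cell(3) by blast
  ultimately show ?thesis
    using that finite_grid_cells[OF P] by blast
qed

definition multirect_additive :: "nat \<Rightarrow> (real list set \<Rightarrow> 'a::plus) \<Rightarrow> bool" where
  "multirect_additive d V \<longleftrightarrow>
     (\<forall>A B. multirect d A \<and> multirect d B \<and> A \<inter> B = {} \<longrightarrow> V (A \<union> B) = V A + V B)"

lemma multirect_Union: "finite K \<Longrightarrow> \<forall>C\<in>K. is_rect d C \<Longrightarrow> multirect d (\<Union>K)"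
  unfolding multirect_def by blast

lemma multirect_additive_sum:
  fixes V :: "real list set \<Rightarrow> 'a::comm_monoid_add"
  assumes "multirect_additive d V" "V {} = 0"
    and "finite K" "\<forall>C\<in>K. is_rect d C" "pairwise disjnt K"
  shows "V (\<Union>K) = (\<Sum>C\<in>K. V C)"
  using assms(3-5)
proof (induction K rule: finite_induct)
  case empty
  then show ?case
    using assms(2) by simp
next
  case (insert C K)
  have "C \<inter> \<Union>K = {}"
    using insert.hyps(2) insert.prems(2) unfolding pairwise_insert disjnt_def by blast
  moreover have "multirect d C"
    using multirect_Union[of "{C}" d] insert.prems(1) by simp
  moreover have "multirect d (\<Union>K)"
    using multirect_Union[OF insert.hyps(1)] insert.prems(1) by simp
  ultimately have "V (\<Union>(insert C K)) = V C + V (\<Union>K)"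
    using assms(1) by (simp add: multirect_additive_def)
  then show ?case
    using insert by (simp add: pairwise_insert)
qed

lemma multirect_additive_empty:
  fixes V :: "real list set \<Rightarrow> tensor"
  assumes "multirect_additive d V"
  shows "V {} = 0"
proof -
  have "multirect d {}"
    using multirect_Union[of "{}"] by simp
  then have "V ({} \<union> {}) = V {} + V {}"
    using assms unfolding multirect_additive_def by blast
  then show ?thesis
    by (intro tensor_add_self_eq_zero) simp
qed

definition volume_on_rects :: "nat \<Rightarrow> (real list set \<Rightarrow> tensor) \<Rightarrow> bool" where
  "volume_on_rects d V \<longleftrightarrow> (\<forall>a t. length a = d \<and> length t = d \<and> (\<forall>i<d. 0 < t ! i) \<longrightarrow>
     V (rect d a (map2 (+) a t)) = ptensor t)"

lemma is_rect_shift_form: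
  assumes "is_rect d C"
  obtains a t where "length a = d" "length t = d" "\<forall>i<d. 0 < t!i" "C = rect d a (map2 (+) a t)"
proof -
  obtain a b where ab: "length a = d" "length b = d" "\<forall>i<d. a!i < b!i" "C = rect d a b"
    using assms unfolding is_rect_def by blast
  have "map2 (+) a (map2 (-) b a) = b"
    using ab(1,2) by (intro nth_equalityI) auto
  then show ?thesis
    using that[of a "map2 (-) b a"] ab by simp
qed

lemma multirect_additive_unique:
  assumes "multirect_additive d V" "volume_on_rects d V"
    and "multirect_additive d W" "volume_on_rects d W"
    and "multirect d M"
  shows "W M = V M"
proof -
  obtain K where K: "finite K" "\<forall>C\<in>K. is_rect d C" "pairwise disjnt K" "\<Union>K = M"
    using multirect_disjoint_rects[OF assms(5)] by metis
  have "W M = (\<Sum>C\<in>K. W C)"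
    using multirect_additive_sum[OF assms(3) multirect_additive_empty[OF assms(3)] K(1-3)] K(4) by simp
  also have "\<dots> = (\<Sum>C\<in>K. V C)"
  proof (rule sum.cong[OF refl])
    fix C assume "C \<in> K"
    then obtain a t where "length a = d" "length t = d" "\<forall>i<d. 0 < t!i" "C = rect d a (map2 (+) a t)"
      using K(2) is_rect_shift_form by metis
    then show "W C = V C"
      using assms(2,4) unfolding volume_on_rects_def by simp
  qed
  also have "\<dots> = V M"
    using multirect_additive_sum[OF assms(1) multirect_additive_empty[OF assms(1)] K(1-3)] K(4) by simp
  finally show ?thesis .
qed

theorem mainTheorem13:
  fixes d :: nat
  assumes "d \<ge> 1"
  shows "\<exists>V :: real list set \<Rightarrow> tensor.
           ((\<forall>M. multirect d M \<longrightarrow> V M \<in> tensor_deg d)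
            \<and> (\<forall>A B. multirect d A \<and> multirect d B \<and> A \<inter> B = {} \<longrightarrow> V (A \<union> B) = V A + V B)
            \<and> (\<forall>a t. length a = d \<and> length t = d \<and> (\<forall>i<d. 0 < t ! i) \<longrightarrow>
                  V (rect d a (map2 (+) a t)) = ptensor t))
         \<and> (\<forall>W :: real list set \<Rightarrow> tensor.
              ((\<forall>M. multirect d M \<longrightarrow> W M \<in> tensor_deg d)
               \<and> (\<forall>A B. multirect d A \<and> multirect d B \<and> A \<inter> B = {} \<longrightarrow> W (A \<union> B) = W A + W B)
               \<and> (\<forall>a t. length a = d \<and> length t = d \<and> (\<forall>i<d. 0 < t ! i) \<longrightarrow>
                     W (rect d a (map2 (+) a t)) = ptensor t))
              \<longrightarrow> (\<forall>M. multirect d M \<longrightarrow> W M = V M))"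
proof -
  have V: "multirect_additive d (tensor_volume d)" "volume_on_rects d (tensor_volume d)"
    by (simp_all add: multirect_additive_def volume_on_rects_def tensor_volume_Un tensor_volume_rect)
  have "W M = tensor_volume d M" if "multirect_additive d W" "volume_on_rects d W" "multirect d M" for W M
    by (rule multirect_additive_unique[OF V that])
  then show ?thesis
    unfolding multirect_additive_def[symmetric] volume_on_rects_def[symmetric]
    using V tensor_volume_in_tensor_deg by blast
qed

end
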